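(* Let $n\geqslant 3$, let $S$ be a caterpillar species tree with $n$ leaves and let $G$ be a caterpillar gene tree on the same label set that differs from $S$ by a nearest-neighbor-interchange (NNI) move. Then (i) the roadblock set $B_{G,S}$ consists of a single point $(i,i)$ for some $i$ with $1\leqslant i\leqslant n-2$; and (ii) the number of coalescent histories for $(G,S)$ is $C_{n-1}-C_iC_{n-1-i}$, where $C_m=\frac{1}{m+1}\binom{2m}{m}$.
   Context: All trees are binary, rooted, leaf-labeled. A caterpillar tree with $n$ leaves is one in which some internal node is descended from all other internal nodes. Its canonical label vector $(x_1,\dots,x_n)$ has $x_1,x_2$ the labels of the two leaves of the cherry (unique internal node with two descendant leaves) and, for $3\leqslant i\leqslant n$, $x_i$ the label of the leaf separated from the root by $n-i+1$ edges; vectors differing only by swapping $x_1,x_2$ describe the same tree. $G$ and $S$ differ by an NNI move if the canonical vector of $S$ is obtained from that of $G$ by exchanging the labels in positions $\{k,k+1\}$ for some $2\leqslant k\leqslant n-1$, or in positions $\{1,3\}$. Internal nodes are numbered $1,\dots,n-1$ from cherry to root; internal edge $i$ is the edge above node $i$, with an extra edge $n-1$ above the root. A coalescent history for $(G,S)$ is a map $h$ from internal nodes of $G$ to internal edges of $S$ such that (1) every label of a leaf below node $v$ of $G$ labels a leaf of $S$ below edge $h(v)$, and (2) if $v_2$ is descended from $v_1$ in $G$ then $h(v_2)$ is descended from $h(v_1)$ (objects are descended from themselves). With $\mathbf g,\mathbf s$ the canonical vectors of $G,S$, $\sigma(x)$ the index of $x$ in $\mathbf s$ and $F(j)=\max\{\sigma(g_1),\dots,\sigma(g_{j+1})\}-1$,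 the roadblock set is $B_{G,S}=\{(i,j)\in\mathbb Z^2:1\leqslant j\leqslant i\leqslant n-1,\ i<F(j)\}$. *)

theory Defs
  imports "HOL-Library.FuncSet" "HOL-Combinatorics.Transposition"
begin

text \<open>A caterpillar tree with n leaves is represented by a canonical label vector
  x :: nat => 'a, with positions 1..n (x 1, x 2 the cherry labels; x i for i >= 3 the
  leaf at distance n-i+1 from the root). Internal node j (1 <= j <= n-1, numbered from
  cherry to root) has below it exactly the leaves labelled x 1, ..., x (j+1); internal
  edge j is the edge above node j (edge n-1 above the root).\<close>

definition cat_vector :: "nat \<Rightarrow> (nat \<Rightarrow> 'a) \<Rightarrow> bool" where
  "cat_vector n x \<longleftrightarrow> inj_on x {1..n}"

definition same_cat :: "nat \<Rightarrow> (nat \<Rightarrow> 'a) \<Rightarrow> (nat \<Rightarrow> 'a) \<Rightarrow> bool" where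
  "same_cat n x y \<longleftrightarrow> (\<forall>i\<in>{1..n}. y i = x i) \<or> (\<forall>i\<in>{1..n}. y i = x (transpose 1 2 i))"

definition nni_cat :: "nat \<Rightarrow> (nat \<Rightarrow> 'a) \<Rightarrow> (nat \<Rightarrow> 'a) \<Rightarrow> bool" where
  "nni_cat n g s \<longleftrightarrow> (\<exists>g' s'. same_cat n g g' \<and> same_cat n s s' \<and>
     ((\<exists>k. 2 \<le> k \<and> k \<le> n - 1 \<and> (\<forall>i\<in>{1..n}. s' i = g' (transpose k (k+1) i)))
      \<or> (\<forall>i\<in>{1..n}. s' i = g' (transpose 1 3 i))))"

text \<open>Coalescent histories for caterpillars (G with vector g, S with vector s):
  maps h from internal nodes {1..n-1} of G to internal edges {1..n-1} of S such that
  (1) the leaf labels below node v of G label leaves of S below edge h v, and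
  (2) if v2 is descended from v1 in G (v2 <= v1) then h v2 is descended from h v1
      (h v2 <= h v1).\<close>
definition coal_histories :: "nat \<Rightarrow> (nat \<Rightarrow> 'a) \<Rightarrow> (nat \<Rightarrow> 'a) \<Rightarrow> (nat \<Rightarrow> nat) set" where
  "coal_histories n g s = {h \<in> {1..n-1} \<rightarrow>\<^sub>E {1..n-1}.
      (\<forall>v\<in>{1..n-1}. g ` {1..v+1} \<subseteq> s ` {1..h v + 1}) \<and>
      (\<forall>v1\<in>{1..n-1}. \<forall>v2\<in>{1..n-1}. v2 \<le> v1 \<longrightarrow> h v2 \<le> h v1)}"

definition sigma_idx :: "nat \<Rightarrow> (nat \<Rightarrow> 'a) \<Rightarrow> 'a \<Rightarrow> nat" where
  "sigma_idx n s x = (THE i. i \<in> {1..n} \<and> s i = x)"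

definition F_fun :: "nat \<Rightarrow> (nat \<Rightarrow> 'a) \<Rightarrow> (nat \<Rightarrow> 'a) \<Rightarrow> nat \<Rightarrow> nat" where
  "F_fun n g s j = Max ((\<lambda>x. sigma_idx n s x) ` g ` {1..j+1}) - 1"

definition roadblock :: "nat \<Rightarrow> (nat \<Rightarrow> 'a) \<Rightarrow> (nat \<Rightarrow> 'a) \<Rightarrow> (nat \<times> nat) set" where
  "roadblock n g s = {(i, j). 1 \<le> j \<and> j \<le> i \<and> i \<le> n - 1 \<and> i < F_fun n g s j}"

definition catalan :: "nat \<Rightarrow> nat" where
  "catalan m = (2 * m choose m) div (m + 1)"

end

theory Submission
  imports Defs
begin

(* Writing q y for the position in S of the label at position y in G, a coalescent history
   is a monotone map h on the internal nodes {1..n-1} with h j >= F j, where F j + 1 is the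
   largest of q 1, ..., q (j+1).  An NNI move between caterpillars changes exactly one clade,
   say that of node i, so F is the identity except for F i = i + 1; this is the unique
   roadblock (i, i).  Monotone maps h >= id from {1..k} to {1..k} are counted by the Catalan
   number C_k, and those violating h i >= i + 1 are the ones with h i = i, which split into
   a map on {1..i} and a shifted map on {i+1..k}: there are C_i C_(k-i) of them. *)

definition monotone_maps_above :: "(nat \<Rightarrow> nat) \<Rightarrow> nat \<Rightarrow> nat \<Rightarrow> (nat \<Rightarrow> nat) set" where
  "monotone_maps_above F k c = {h \<in> {1..k} \<rightarrow>\<^sub>E {1..c}. (\<forall>v\<in>{1..k}. F v \<le> h v) \<and>
     (\<forall>v1\<in>{1..k}. \<forall>v2\<in>{1..k}. v2 \<le> v1 \<longrightarrow> h v2 \<le> h v1)}"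

lemma monotone_maps_above_0: "monotone_maps_above F 0 c = {\<lambda>_. undefined}"
  unfolding monotone_maps_above_def by auto

lemma finite_monotone_maps_above: "finite (monotone_maps_above F k c)"
  unfolding monotone_maps_above_def
  by (rule finite_subset[of _ "{1..k} \<rightarrow>\<^sub>E {1..c}"]) (auto intro: finite_PiE)

lemma monotone_maps_above_cong:
  "(\<And>v. v \<in> {1..k} \<Longrightarrow> F v = F' v) \<Longrightarrow> monotone_maps_above F k c = monotone_maps_above F' k c"
  unfolding monotone_maps_above_def by auto

lemma monotone_maps_above_Suc:
  "monotone_maps_above F (Suc k) c =
     (\<lambda>(x, h). h(Suc k := x)) ` (SIGMA x:{max 1 (F (Suc k))..c}. monotone_maps_above F k x)"
proof (intro equalityI subsetI)
  fix h assume h: "h \<in> monotone_maps_above F (Suc k) c"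
  then have "h(Suc k := undefined) \<in> monotone_maps_above F k (h (Suc k))"
    by (fastforce simp: monotone_maps_above_def PiE_iff extensional_def)
  moreover have "h (Suc k) \<in> {max 1 (F (Suc k))..c}"
    using h by (auto simp: monotone_maps_above_def)
  ultimately show "h \<in> (\<lambda>(x, h). h(Suc k := x)) `
      (SIGMA x:{max 1 (F (Suc k))..c}. monotone_maps_above F k x)"
    by (auto intro!: image_eqI[where x = "(h (Suc k), h(Suc k := undefined))"])
next
  fix h' assume "h' \<in> (\<lambda>(x, h). h(Suc k := x)) `
      (SIGMA x:{max 1 (F (Suc k))..c}. monotone_maps_above F k x)"
  then obtain x h where x: "x \<in> {max 1 (F (Suc k))..c}" and h: "h \<in> monotone_maps_above F k x"
    and h': "h' = h(Suc k := x)" by auto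
  have le_x: "h v \<le> x" if "v \<in> {1..k}" for v
    using h that by (auto simp: monotone_maps_above_def)
  with x have le_c: "h v \<le> c" if "v \<in> {1..k}" for v
    using that by fastforce
  show "h' \<in> monotone_maps_above F (Suc k) c"
    using x h le_x le_c unfolding h' monotone_maps_above_def
    by (auto simp: PiE_iff extensional_def le_Suc_eq)
qed

lemma card_monotone_maps_above_Suc:
  "card (monotone_maps_above F (Suc k) c) =
     (\<Sum>x\<in>{max 1 (F (Suc k))..c}. card (monotone_maps_above F k x))"
proof -
  have "inj_on (\<lambda>(x, h). h(Suc k := x)) (SIGMA x:{max 1 (F (Suc k))..c}. monotone_maps_above F k x)"
    by (rule inj_on_subset[OF inj_combinator[of "Suc k" "{1..k}" "\<lambda>_. UNIV"]])
      (auto simp: monotone_maps_above_def PiE_iff extensional_def)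
  then show ?thesis
    by (simp add: monotone_maps_above_Suc card_image finite_monotone_maps_above)
qed

definition ballot :: "nat \<Rightarrow> nat \<Rightarrow> nat" where
  "ballot k c = card (monotone_maps_above (\<lambda>v. v) k c)"

lemma ballot_0 [simp]: "ballot 0 c = 1"
  by (simp add: ballot_def monotone_maps_above_0)

lemma ballot_Suc: "ballot (Suc k) c = (\<Sum>x\<in>{Suc k..c}. ballot k x)"
  by (simp add: ballot_def card_monotone_maps_above_Suc)

lemma ballot_add_choose: "k \<le> Suc c \<Longrightarrow> ballot k c + (k + c choose Suc c) = (k + c choose c)"
proof (induction k arbitrary: c)
  case 0
  then show ?case by simp
next
  case (Suc k)
  from Suc.prems have "k \<le> c" by simp
  then show ?case
  proof (induction c rule: dec_induct)
    case base
    have "ballot (Suc k) k = 0" by (simp add: ballot_Suc)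
    then show ?case
      using binomial_symmetric[of k "Suc k + k"] by simp
  next
    case (step c)
    have "ballot (Suc k) (Suc c) = ballot (Suc k) c + ballot k (Suc c)"
      using step.hyps by (simp add: ballot_Suc)
    then show ?case
      using Suc.IH[of "Suc c"] step by simp
  qed
qed

lemma ballot_diag_eq_catalan: "ballot k k = catalan k"
proof -
  have sum: "ballot k k + (2 * k choose Suc k) = (2 * k choose k)"
    using ballot_add_choose[of k k] by (simp add: mult_2)
  have "Suc k * (2 * k choose Suc k) = k * (2 * k choose k)"
    using Suc_times_binomial_add[of k "k - 1"] by (cases k) (simp_all add: mult_2)
  with sum have "Suc k * ballot k k = (2 * k choose k)"
    by (metis add_mult_distrib2 add_right_cancel mult_Suc)
  then show ?thesis
    unfolding catalan_def by (metis Suc_eq_plus1 Suc_neq_Zero nonzero_mult_div_cancel_left)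
qed

definition bump :: "nat \<Rightarrow> nat \<Rightarrow> nat" where
  "bump i v = (if v = i then Suc i else v)"

lemma card_monotone_maps_above_bump:
  assumes "1 \<le> i" "i \<le> k" "k \<le> c"
  shows "card (monotone_maps_above (bump i) k c) + ballot i i * ballot (k - i) (c - i) = ballot k c"
  using assms(2,3)
proof (induction k arbitrary: c rule: dec_induct)
  case base
  obtain j where j: "i = Suc j" using assms(1) by (cases i) auto
  have "monotone_maps_above (bump i) j x = monotone_maps_above (\<lambda>v. v) j x" for x
    by (rule monotone_maps_above_cong) (simp add: bump_def j)
  then have "card (monotone_maps_above (bump i) i c) = (\<Sum>x\<in>{Suc i..c}. ballot j x)"
    by (simp add: j card_monotone_maps_above_Suc ballot_def bump_def)
  moreover have "ballot i c = ballot i i + (\<Sum>x\<in>{Suc i..c}. ballot j x)"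
    using base by (simp add: j ballot_Suc sum.atLeast_Suc_atMost)
  ultimately show ?case by simp
next
  case (step m)
  have "card (monotone_maps_above (bump i) (Suc m) c) =
      (\<Sum>x\<in>{Suc m..c}. card (monotone_maps_above (bump i) m x))"
    using step.hyps by (simp add: card_monotone_maps_above_Suc bump_def)
  moreover have "(\<Sum>x\<in>{Suc m..c}. ballot (m - i) (x - i)) = ballot (Suc m - i) (c - i)"
  proof -
    have "(\<Sum>x\<in>{Suc m..c}. ballot (m - i) (x - i)) =
        (\<Sum>x\<in>{Suc (m - i) + i..(c - i) + i}. ballot (m - i) (x - i))"
      using step by simp
    also have "\<dots> = (\<Sum>y\<in>{Suc (m - i)..c - i}. ballot (m - i) y)"
      by (subst sum.shift_bounds_cl_nat_ivl) simp
    finally show ?thesis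
      using step.hyps by (simp add: ballot_Suc Suc_diff_le)
  qed
  moreover have "(\<Sum>x\<in>{Suc m..c}. card (monotone_maps_above (bump i) m x)
      + ballot i i * ballot (m - i) (x - i)) = ballot (Suc m) c"
    unfolding ballot_Suc using step.IH by (intro sum.cong) auto
  ultimately show ?case
    by (simp add: sum.distrib flip: sum_distrib_left)
qed

definition position_map :: "nat \<Rightarrow> (nat \<Rightarrow> 'a) \<Rightarrow> (nat \<Rightarrow> 'a) \<Rightarrow> (nat \<Rightarrow> nat) \<Rightarrow> bool" where
  "position_map n g s q \<longleftrightarrow> (\<forall>y\<in>{1..n}. q y \<in> {1..n} \<and> g y = s (q y))"

lemma sigma_idx_eq: "inj_on s {1..n} \<Longrightarrow> p \<in> {1..n} \<Longrightarrow> sigma_idx n s (s p) = p"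
  unfolding sigma_idx_def by (rule the_equality) (auto dest: inj_onD)

lemma F_fun_position_map:
  assumes "inj_on s {1..n}" "position_map n g s q" "j < n"
  shows "F_fun n g s j = Max (q ` {1..j+1}) - 1"
proof -
  have "sigma_idx n s (g y) = q y" if "y \<in> {1..j+1}" for y
    using assms that sigma_idx_eq[OF assms(1)] by (simp add: position_map_def)
  then have "(\<lambda>x. sigma_idx n s x) ` g ` {1..j+1} = q ` {1..j+1}"
    by (simp add: image_image)
  then show ?thesis
    by (simp add: F_fun_def)
qed

lemma prefix_subset_iff_F_fun:
  assumes "inj_on s {1..n}" "position_map n g s q" "v < n" "t < n"
  shows "g ` {1..v+1} \<subseteq> s ` {1..t+1} \<longleftrightarrow> F_fun n g s v \<le> t"
proof -
  have "g y \<in> s ` {1..t+1} \<longleftrightarrow> q y \<le> t + 1" if "y \<in> {1..v+1}" for y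
    using assms that inj_on_image_mem_iff[OF assms(1), of "q y" "{1..t+1}"]
    by (auto simp: position_map_def)
  then have "g ` {1..v+1} \<subseteq> s ` {1..t+1} \<longleftrightarrow> (\<forall>y\<in>{1..v+1}. q y \<le> t + 1)"
    by (simp add: image_subset_iff)
  also have "\<dots> \<longleftrightarrow> Max (q ` {1..v+1}) \<le> t + 1"
    by simp
  also have "\<dots> \<longleftrightarrow> F_fun n g s v \<le> t"
    by (simp only: F_fun_position_map[OF assms(1,2,3)] le_diff_conv)
  finally show ?thesis .
qed

lemma coal_histories_eq_monotone_maps_above:
  assumes "inj_on s {1..n}" "position_map n g s q"
  shows "coal_histories n g s = monotone_maps_above (F_fun n g s) (n - 1) (n - 1)"
proof -
  have constraint_iff: "(\<forall>v\<in>{1..n-1}. g ` {1..v+1} \<subseteq> s ` {1..h v+1}) \<longleftrightarrow>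
      (\<forall>v\<in>{1..n-1}. F_fun n g s v \<le> h v)" if h: "h \<in> {1..n-1} \<rightarrow>\<^sub>E {1..n-1}" for h
  proof (rule ball_cong[OF refl])
    fix v assume v: "v \<in> {1..n-1}"
    with h have "h v \<in> {1..n-1}" by (rule PiE_mem)
    with v show "g ` {1..v+1} \<subseteq> s ` {1..h v+1} \<longleftrightarrow> F_fun n g s v \<le> h v"
      by (intro prefix_subset_iff_F_fun[OF assms]) auto
  qed
  then show ?thesis
    unfolding coal_histories_def monotone_maps_above_def by (simp cong: conj_cong)
qed

lemma roadblock_eq_singleton:
  assumes "\<And>j. j \<in> {1..n-1} \<Longrightarrow> F_fun n g s j = bump i j" "1 \<le> i" "i \<le> n - 2"
  shows "roadblock n g s = {(i, i)}"
proof
  show "roadblock n g s \<subseteq> {(i, i)}"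
  proof clarify
    fix a b assume "(a, b) \<in> roadblock n g s"
    then have ab: "1 \<le> b" "b \<le> a" "a \<le> n - 1" "a < F_fun n g s b"
      by (auto simp: roadblock_def)
    with assms(1)[of b] have "a < bump i b" by simp
    with ab show "a = i \<and> b = i" by (auto simp: bump_def split: if_splits)
  qed
  show "{(i, i)} \<subseteq> roadblock n g s"
    using assms by (simp add: roadblock_def bump_def)
qed

lemma same_cat_iff: "same_cat n x y \<longleftrightarrow> (\<exists>a\<in>{id, transpose 1 2}. \<forall>i\<in>{1..n}. y i = x (a i))"
  unfolding same_cat_def by auto

lemma swap12_image_prefix: "a \<in> {id, transpose 1 (2::nat)} \<Longrightarrow> 2 \<le> m \<Longrightarrow> a ` {1..m} = {1..m}"
  by (elim insertE emptyE) simp_all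

lemma Max_nni_image_prefix:
  assumes a: "a \<in> {id, transpose 1 (2::nat)}" and b: "b \<in> {id, transpose 1 (2::nat)}"
    and tau: "(\<tau> = transpose (i+1) (i+2) \<and> 1 \<le> i) \<or> (\<tau> = transpose 1 3 \<and> i = 1)"
    and "1 \<le> j"
  shows "Max ((b \<circ> \<tau> \<circ> a) ` {1..j+1}) = bump i j + 1"
proof -
  have "(b \<circ> \<tau> \<circ> a) ` {1..j+1} = b ` \<tau> ` a ` {1..j+1}"
    by (simp add: image_comp)
  also have "a ` {1..j+1} = {1..j+1}"
    using swap12_image_prefix[OF a] \<open>1 \<le> j\<close> by simp
  finally have "(b \<circ> \<tau> \<circ> a) ` {1..j+1} = b ` \<tau> ` {1..j+1}" .
  moreover consider "j \<noteq> i" | "j = i" by blast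
  then have "Max (b ` \<tau> ` {1..j+1}) = bump i j + 1"
  proof cases
    case 1
    have "\<tau> ` {1..j+1} = {1..j+1}"
      using tau
    proof (elim disjE conjE)
      assume "\<tau> = transpose (i+1) (i+2)"
      moreover have "i + 1 \<in> {1..j+1} \<longleftrightarrow> i + 2 \<in> {1..j+1}"
        using 1 by auto
      ultimately show ?thesis by (simp only: transpose_image_eq)
    next
      assume "\<tau> = transpose 1 3" and "i = 1"
      moreover have "1 \<in> {1..j+1} \<longleftrightarrow> 3 \<in> {1..j+1}"
        using 1 \<open>1 \<le> j\<close> \<open>i = 1\<close> by auto
      ultimately show ?thesis by (simp only: transpose_image_eq)
    qed
    then show ?thesis
      using swap12_image_prefix[OF b, of "j+1"] \<open>1 \<le> j\<close> 1 by (auto simp: bump_def intro!: Max_eqI)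
  next
    case 2
    have \<tau>_sub: "\<tau> ` {1..i+1} \<subseteq> {1..i+2}" and \<tau>_top: "\<tau> (i+2) \<in> {1..i+1}"
      and \<tau>_inv: "\<tau> (\<tau> (i+2)) = i + 2"
      using tau by (auto simp: transpose_def)
    have "b ` \<tau> ` {1..i+1} \<subseteq> b ` {1..i+2}"
      using \<tau>_sub by (rule image_mono)
    also have "\<dots> = {1..i+2}"
      using swap12_image_prefix[OF b] by simp
    finally have sub: "b ` \<tau> ` {1..i+1} \<subseteq> {1..i+2}" .
    have "b (i+2) = i + 2"
      using b tau by (auto simp: transpose_def)
    with \<tau>_top \<tau>_inv have top: "i + 2 \<in> b ` \<tau> ` {1..i+1}"
      by (metis imageI)
    show ?thesis
    proof (rule Max_eqI)
      show "y \<le> bump i j + 1" if "y \<in> b ` \<tau> ` {1..j+1}" for y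
        using subsetD[OF sub] that 2 by (force simp: bump_def)
      show "bump i j + 1 \<in> b ` \<tau> ` {1..j+1}"
        using top 2 by (simp add: bump_def)
    qed simp
  qed
  ultimately show ?thesis by simp
qed

lemma nni_catE:
  assumes "nni_cat n g s" "3 \<le> n"
  obtains g' s' \<tau> i where "same_cat n g g'" "same_cat n s s'"
    "(\<tau> = transpose (i+1) (i+2) \<and> 1 \<le> i) \<or> (\<tau> = transpose 1 3 \<and> i = 1)"
    "1 \<le> i" "i \<le> n - 2" "\<forall>x\<in>{1..n}. s' x = g' (\<tau> x)"
proof -
  obtain g' s' where g': "same_cat n g g'" and s': "same_cat n s s'" and
    "(\<exists>k. 2 \<le> k \<and> k \<le> n - 1 \<and> (\<forall>x\<in>{1..n}. s' x = g' (transpose k (k+1) x)))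
      \<or> (\<forall>x\<in>{1..n}. s' x = g' (transpose 1 3 x))"
    using assms(1) unfolding nni_cat_def by blast
  then show thesis
  proof (elim disjE exE conjE)
    fix k assume "2 \<le> k" "k \<le> n - 1" "\<forall>x\<in>{1..n}. s' x = g' (transpose k (k+1) x)"
    then show thesis
      using that[of g' s' "transpose k (k+1)" "k - 1"] g' s'
      by (simp add: numeral_2_eq_2 Suc_diff_le)
  next
    assume "\<forall>x\<in>{1..n}. s' x = g' (transpose 1 3 x)"
    then show thesis
      using that[of g' s' "transpose 1 3" 1] g' s' assms(2) by simp
  qed
qed

lemma nni_cat_position_map:
  assumes "nni_cat n g s" "3 \<le> n"
  obtains q i where "position_map n g s q" "1 \<le> i" "i \<le> n - 2"
    "\<And>j. 1 \<le> j \<Longrightarrow> Max (q ` {1..j+1}) = bump i j + 1"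
proof -
  obtain g' s' \<tau> i where g': "same_cat n g g'" and s': "same_cat n s s'"
    and tau: "(\<tau> = transpose (i+1) (i+2) \<and> 1 \<le> i) \<or> (\<tau> = transpose 1 3 \<and> i = 1)"
    and i: "1 \<le> i" "i \<le> n - 2" and s'_g': "\<forall>x\<in>{1..n}. s' x = g' (\<tau> x)"
    using nni_catE[OF assms] .
  obtain a where a: "a \<in> {id, transpose 1 2}" and g'_g: "\<forall>x\<in>{1..n}. g' x = g (a x)"
    using g' unfolding same_cat_iff by blast
  obtain b where b: "b \<in> {id, transpose 1 2}" and s'_s: "\<forall>x\<in>{1..n}. s' x = s (b x)"
    using s' unfolding same_cat_iff by blast
  have range: "a x \<in> {1..n}" "b x \<in> {1..n}" "\<tau> x \<in> {1..n}" if "x \<in> {1..n}" for x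
    using that a b tau i assms(2) by (auto simp: transpose_def)
  have involution: "a (a x) = x" "\<tau> (\<tau> x) = x" for x
    using a tau by auto
  have "position_map n g s (b \<circ> \<tau> \<circ> a)"
    unfolding position_map_def
  proof
    fix y assume y: "y \<in> {1..n}"
    then have ay: "a y \<in> {1..n}" and \<tau>ay: "\<tau> (a y) \<in> {1..n}"
      using range by auto
    then have "(b \<circ> \<tau> \<circ> a) y \<in> {1..n}"
      using range by auto
    moreover have "g y = s ((b \<circ> \<tau> \<circ> a) y)"
      using g'_g s'_s s'_g' ay \<tau>ay involution by (metis comp_apply)
    ultimately show "(b \<circ> \<tau> \<circ> a) y \<in> {1..n} \<and> g y = s ((b \<circ> \<tau> \<circ> a) y)" ..
  qed
  with i Max_nni_image_prefix[OF a b tau] show thesis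
    using that by blast
qed

theorem proposition5:
  fixes n :: nat and g s :: "nat \<Rightarrow> 'a"
  assumes "n \<ge> 3"
    and "cat_vector n s" and "cat_vector n g"
    and "g ` {1..n} = s ` {1..n}"
    and "nni_cat n g s"
  shows "\<exists>i. 1 \<le> i \<and> i \<le> n - 2 \<and> roadblock n g s = {(i, i)} \<and>
           card (coal_histories n g s) = catalan (n - 1) - catalan i * catalan (n - 1 - i)"
proof -
  obtain q i where q: "position_map n g s q" and i: "1 \<le> i" "i \<le> n - 2"
    and Max_q: "\<And>j. 1 \<le> j \<Longrightarrow> Max (q ` {1..j+1}) = bump i j + 1"
    using nni_cat_position_map[OF assms(5,1)] by blast
  have inj: "inj_on s {1..n}"
    using assms(2) by (simp add: cat_vector_def)
  have F: "F_fun n g s j = bump i j" if "j \<in> {1..n-1}" for j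
    using F_fun_position_map[OF inj q] Max_q that by auto
  have "coal_histories n g s = monotone_maps_above (bump i) (n - 1) (n - 1)"
    using coal_histories_eq_monotone_maps_above[OF inj q] monotone_maps_above_cong F by metis
  then have "card (coal_histories n g s) + ballot i i * ballot (n - 1 - i) (n - 1 - i) =
      ballot (n - 1) (n - 1)"
    using card_monotone_maps_above_bump[of i "n - 1" "n - 1"] i by simp
  then have "card (coal_histories n g s) = catalan (n - 1) - catalan i * catalan (n - 1 - i)"
    by (simp add: ballot_diag_eq_catalan)
  with roadblock_eq_singleton[OF F i] i show ?thesis
    by blast
qed

end
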